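(* In the setting below, let $H^1$ denote the first cohomology of the complex $C^\bullet$. There is a functorial short exact sequence $$0\to D_K/F^0\to H^1\to (T^{-1}/NT^0)\otimes\mathbb{Q}_p\to 0,$$ where the first map sends $c$ to the class of $(0,0,c)$ and the second sends the class of any cocycle of the form $(0,y,c)$ (every class has such a representative, and then $y\in T^{-1}\otimes\mathbb{Q}_p\subset D^{-1}$ modulo components of other slopes that are coboundaries) to the class of the $D^{-1}$-component of $y$. Moreover there is a well-defined functorial map $H^1\to D_K/(F^0+T^0\otimes\mathbb{Q}_p)$ sending a class to the image of $c$ for any representative $(0,y,c)$, and its composition with $D_K/F^0\to H^1$ is the natural projection $D_K/F^0\to D_K/(F^0+T^0\otimes\mathbb{Q}_p)$.
   Context: Let $K$ be a finite extension of $\mathbb{Q}_p$, $K_0$ its maximal unramified subfield, $\sigma$ the Frobenius of $K_0$. Let $T^i$ ($i\in\mathbb{Z}$, finitely many nonzero) be finitely generated free abelian groups with $\mathbb{Z}$-linear maps $N:T^i\to T^{i-1}$ such that $N\otimes\mathbb{Q}:T^0\otimes\mathbb{Q}\to T^{-1}\otimes\mathbb{Q}$ is injective. Let $D=\bigoplus_i D^i$, $D^i=T^i\otimes_{\mathbb{Z}}K_0$, with $\sigma$-semilinear Frobenius $\varphi$ acting on $D^i$ as $p^i(1\otimes\sigma)$ and $K_0$-linear monodromy $N=N\otimes1:D^i\to D^{i-1}$ (so $N\varphi=p\varphi N$). Let $D_K=D\otimes_{K_0}K$ with a decreasing filtration $F^\bullet$; $T^0\otimes\mathbb{Q}_p\subset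 D^0\subset D_K$. (This models $D=D_{st}(V)$, $D_K=D_{dR}(V)$ for $V=H^k_{\text{ét}}(X_{\bar K},\mathbb{Q}_p(r))$ with $X$ totally degenerate, $T^i=T^{k-2r-2i}_{i+r}$.) The complex $C^\bullet$ is $$D\xrightarrow{x\mapsto(\varphi x-x,\;Nx,\;-x\bmod F^0)}D\oplus D\oplus D_K/F^0\xrightarrow{(a,b,c)\mapsto Na+b-p\varphi b}D,$$ in degrees $0,1,2$; its $H^1$ is the semi-stable cohomology $H^1_{st}(K,V)$. *)

theory Defs
  imports Complex_Main "HOL-Computational_Algebra.Primes"
begin

definition nonarch_abs :: "('a::field \<Rightarrow> real) \<Rightarrow> bool" where
  "nonarch_abs av \<longleftrightarrow>
     (\<forall>x. av x \<ge> 0) \<and> (\<forall>x. av x = 0 \<longleftrightarrow> x = 0) \<and>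
     (\<forall>x y. av (x * y) = av x * av y) \<and>
     (\<forall>x y. av (x + y) \<le> max (av x) (av y))"

text \<open>K_0 (type 'k) with absolute value av and automorphism sigma is a finite unramified
  extension of Q_p and sigma is its (arithmetic) Frobenius: complete, discretely valued with
  uniformizer p and value group p^Z, finite residue field, sigma an isometric field
  automorphism lifting x |-> x^p on the residue field.\<close>
definition unramified_padic :: "nat \<Rightarrow> ('k::field_char_0 \<Rightarrow> real) \<Rightarrow> ('k \<Rightarrow> 'k) \<Rightarrow> bool" where
  "unramified_padic p av \<sigma> \<longleftrightarrow>
     prime p \<and> nonarch_abs av \<and>
     av (of_nat p) = 1 / real p \<and>
     (\<forall>x. x \<noteq> 0 \<longrightarrow> (\<exists>m::int. av x = real p powr (of_int m))) \<and>
     (\<forall>X::nat \<Rightarrow> 'k. (\<forall>e>0. \<exists>M. \<forall>m\<ge>M. \<forall>n\<ge>M. av (X m - X n) < e) \<longrightarrow>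
          (\<exists>L. \<forall>e>0. \<exists>M. \<forall>n\<ge>M. av (X n - L) < e)) \<and>
     (\<exists>R. finite R \<and> (\<forall>x. av x \<le> 1 \<longrightarrow> (\<exists>r\<in>R. av (x - r) < 1))) \<and>
     bij \<sigma> \<and> (\<forall>x y. \<sigma> (x + y) = \<sigma> x + \<sigma> y) \<and> (\<forall>x y. \<sigma> (x * y) = \<sigma> x * \<sigma> y) \<and>
     \<sigma> 1 = 1 \<and> (\<forall>x. av (\<sigma> x) = av x) \<and>
     (\<forall>x. av x \<le> 1 \<longrightarrow> av (\<sigma> x - x ^ p) < 1)"

text \<open>K (type 'K) is a finite field extension of K_0 (via the embedding iota) whose valuation
  extends that of K_0 and whose residue field equals that of K_0, i.e. K_0 is the maximal
  unramified subfield of K.\<close>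
definition max_unram_in :: "('k::field_char_0 \<Rightarrow> real) \<Rightarrow> ('k \<Rightarrow> 'K::field) \<Rightarrow> bool" where
  "max_unram_in av \<iota> \<longleftrightarrow>
     inj \<iota> \<and> (\<forall>x y. \<iota> (x + y) = \<iota> x + \<iota> y) \<and> (\<forall>x y. \<iota> (x * y) = \<iota> x * \<iota> y) \<and> \<iota> 1 = 1 \<and>
     (\<exists>B::'K set. finite B \<and> (\<forall>z. \<exists>c. z = (\<Sum>b\<in>B. \<iota> (c b) * b))) \<and>
     (\<exists>avK. nonarch_abs avK \<and> (\<forall>x. avK (\<iota> x) = av x) \<and>
        (\<forall>z. avK z \<le> 1 \<longrightarrow> (\<exists>x. av x \<le> 1 \<and> avK (z - \<iota> x) < 1)))"

text \<open>T^i = Z^(n i) (free of rank n i) with N : T^(i+1) -> T^i given by the integer matrix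
  Nm (i+1) (entry (j,k), j < n i, k < n (i+1)).  D^i = T^i \<otimes> K_0 = K_0^(n i);
  an element of D is a function d i j with d i j = 0 for j >= n i.
  D_K = D \<otimes> K_0 K is represented in the same way with entries in K.\<close>

definition Dsp :: "(int \<Rightarrow> nat) \<Rightarrow> (int \<Rightarrow> nat \<Rightarrow> 'a::zero) set" where
  "Dsp n = {d. \<forall>i j. n i \<le> j \<longrightarrow> d i j = 0}"

definition ipow :: "'a::field \<Rightarrow> int \<Rightarrow> 'a" where
  "ipow x i = (if 0 \<le> i then x ^ nat i else inverse (x ^ nat (- i)))"

definition phiD :: "nat \<Rightarrow> ('k::field \<Rightarrow> 'k) \<Rightarrow> (int \<Rightarrow> nat \<Rightarrow> 'k) \<Rightarrow> (int \<Rightarrow> nat \<Rightarrow> 'k)" where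
  "phiD p \<sigma> d = (\<lambda>i j. ipow (of_nat p) i * \<sigma> (d i j))"

definition ND :: "(int \<Rightarrow> nat) \<Rightarrow> (int \<Rightarrow> nat \<Rightarrow> nat \<Rightarrow> int) \<Rightarrow> (int \<Rightarrow> nat \<Rightarrow> 'k::field) \<Rightarrow> (int \<Rightarrow> nat \<Rightarrow> 'k)" where
  "ND n Nm d = (\<lambda>i j. if j < n i then (\<Sum>k<n (i + 1). of_int (Nm (i + 1) j k) * d (i + 1) k) else 0)"

definition extK :: "('k \<Rightarrow> 'K) \<Rightarrow> (int \<Rightarrow> nat \<Rightarrow> 'k) \<Rightarrow> (int \<Rightarrow> nat \<Rightarrow> 'K)" where
  "extK \<iota> d = (\<lambda>i j. \<iota> (d i j))"

text \<open>T^i \<otimes> Q_p \<subseteq> D^i \<subseteq> D; Q_p is the fixed field of sigma in K_0.\<close>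
definition TQp :: "(int \<Rightarrow> nat) \<Rightarrow> ('k::field \<Rightarrow> 'k) \<Rightarrow> int \<Rightarrow> (int \<Rightarrow> nat \<Rightarrow> 'k) set" where
  "TQp n \<sigma> i = {d \<in> Dsp n. (\<forall>i' j. i' \<noteq> i \<longrightarrow> d i' j = 0) \<and> (\<forall>j. \<sigma> (d i j) = d i j)}"

definition filtration :: "(int \<Rightarrow> nat) \<Rightarrow> (int \<Rightarrow> (int \<Rightarrow> nat \<Rightarrow> 'K::field) set) \<Rightarrow> bool" where
  "filtration n F \<longleftrightarrow> (\<forall>m. F m \<subseteq> Dsp n \<and> (\<lambda>i j. 0) \<in> F m \<and>
       (\<forall>x\<in>F m. \<forall>y\<in>F m. (\<lambda>i j. x i j + y i j) \<in> F m) \<and>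
       (\<forall>a. \<forall>x\<in>F m. (\<lambda>i j. a * x i j) \<in> F m) \<and> F (m + 1) \<subseteq> F m)"

text \<open>1-cochains (a,b,c) with c \<in> D_K standing for its class in D_K/F^0.
  Cocycle condition: N a + b - p phi b = 0.\<close>
definition cocycle :: "(int \<Rightarrow> nat) \<Rightarrow> (int \<Rightarrow> nat \<Rightarrow> nat \<Rightarrow> int) \<Rightarrow> nat \<Rightarrow> ('k::field \<Rightarrow> 'k) \<Rightarrow> (int \<Rightarrow> nat \<Rightarrow> 'k) \<Rightarrow> (int \<Rightarrow> nat \<Rightarrow> 'k) \<Rightarrow> (int \<Rightarrow> nat \<Rightarrow> 'K::field) \<Rightarrow> bool" where
  "cocycle n Nm p \<sigma> a b c \<longleftrightarrow> a \<in> Dsp n \<and> b \<in> Dsp n \<and> c \<in> Dsp n \<and>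
     (\<forall>i j. ND n Nm a i j + b i j - of_nat p * phiD p \<sigma> b i j = 0)"

definition coboundary :: "(int \<Rightarrow> nat) \<Rightarrow> (int \<Rightarrow> nat \<Rightarrow> nat \<Rightarrow> int) \<Rightarrow> nat \<Rightarrow> ('k::field \<Rightarrow> 'k) \<Rightarrow> ('k \<Rightarrow> 'K::field) \<Rightarrow> (int \<Rightarrow> nat \<Rightarrow> 'K) set \<Rightarrow> (int \<Rightarrow> nat \<Rightarrow> 'k) \<Rightarrow> (int \<Rightarrow> nat \<Rightarrow> 'k) \<Rightarrow> (int \<Rightarrow> nat \<Rightarrow> 'K) \<Rightarrow> bool" where
  "coboundary n Nm p \<sigma> \<iota> F0 a b c \<longleftrightarrow>
     (\<exists>x\<in>Dsp n. \<exists>f\<in>F0. (\<forall>i j. a i j = phiD p \<sigma> x i j - x i j) \<and>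
        (\<forall>i j. b i j = ND n Nm x i j) \<and> (\<forall>i j. c i j = - extK \<iota> x i j + f i j))"

definition cohomologous where
  "cohomologous n Nm p \<sigma> \<iota> F0 a b c a' b' c' \<longleftrightarrow>
     coboundary n Nm p \<sigma> \<iota> F0 (\<lambda>i j. a i j - a' i j) (\<lambda>i j. b i j - b' i j) (\<lambda>i j. c i j - c' i j)"

end

theory Submission
  imports Defs "HOL-Library.FuncSet"
begin

text \<open>
  The Frobenius \<sigma> of K_0 has finite order: it permutes the finitely many residue classes, so
  some power \<sigma>^f is congruent to the identity; \<sigma>^f then fixes every Teichmueller
  representative \<tau>, and writing x = \<tau> + p x' shows inductively that \<sigma>^f x - x is divisible by
  every power of p. Hence, for i \<noteq> 0, the map x \<mapsto> p^i \<sigma> x - x on K_0 is injective (it scales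
  absolute values) and surjective (by an explicit finite geometric sum), while \<sigma> x - x has
  kernel \<rat>_p and image the elements of trace zero (additive Hilbert 90).

  Since \<phi> acts on D^i as p^i \<sigma>, every cocycle (a, b, c) becomes (0, y, c') after subtracting
  the coboundary of a solution of \<phi> x - x = a; in degree 0 this equation is solvable because
  the cocycle condition makes N a_0 an element of trace zero and N is injective on T^0. For a
  cocycle (0, y, c) the condition y = p \<phi> y confines y to \<sigma>-invariant vectors in D^-1. Two such
  representatives differ by the coboundary of some x with \<phi> x = x, i.e. x \<in> T^0 \<otimes> \<rat>_p,
  which moves y_-1 by N x and c by x.
\<close>

section \<open>Nonarchimedean absolute values and field homomorphisms\<close>

locale nonarch_valued_field =
  fixes av :: "'a::field \<Rightarrow> real"
  assumes nonarch: "nonarch_abs av"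
begin

lemma av_nonneg: "av x \<ge> 0"
  using nonarch unfolding nonarch_abs_def by blast

lemma av_eq_0_iff [simp]: "av x = 0 \<longleftrightarrow> x = 0"
  using nonarch unfolding nonarch_abs_def by blast

lemma av_mult: "av (x * y) = av x * av y"
  using nonarch unfolding nonarch_abs_def by blast

lemma av_add_le_max: "av (x + y) \<le> max (av x) (av y)"
  using nonarch unfolding nonarch_abs_def by blast

lemma av_0 [simp]: "av 0 = 0"
  by simp

lemma av_1 [simp]: "av 1 = 1"
  using av_mult[of 1 1] by simp

lemma av_uminus [simp]: "av (- x) = av x"
proof -
  have "av (- 1) * av (- 1) = 1"
    using av_mult[of "- 1" "- 1"] by simp
  then have "av (- 1) = 1"
    using av_nonneg[of "- 1"] power2_eq_1_iff[of "av (- 1)"] by (simp add: power2_eq_square)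
  then show ?thesis
    using av_mult[of "- 1" x] by simp
qed

lemma av_diff_commute: "av (x - y) = av (y - x)"
  using av_uminus[of "x - y"] by simp

lemma av_diff_le_max: "av (x - y) \<le> max (av x) (av y)"
  using av_add_le_max[of x "- y"] by simp

lemma av_diff_trans_le: "av (x - y) \<le> B \<Longrightarrow> av (y - z) \<le> B \<Longrightarrow> av (x - z) \<le> B"
  using av_add_le_max[of "x - y" "y - z"] by simp

lemma av_diff_trans_less: "av (x - y) < B \<Longrightarrow> av (y - z) < B \<Longrightarrow> av (x - z) < B"
  using av_add_le_max[of "x - y" "y - z"] by simp

lemma av_power: "av (x ^ k) = av x ^ k"
  by (induction k) (auto simp: av_mult)

lemma av_power_le_1: "av x \<le> 1 \<Longrightarrow> av (x ^ k) \<le> 1"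
  by (simp add: av_power power_le_one av_nonneg)

lemma av_inverse: "av (inverse x) = inverse (av x)"
proof (cases "x = 0")
  case False
  then have "av x * av (inverse x) = 1"
    using av_mult[of x "inverse x"] by simp
  then show ?thesis
    by (simp add: inverse_unique)
qed simp

lemma av_divide: "av (x / y) = av x / av y"
  by (simp add: divide_inverse av_mult av_inverse)

lemma av_of_nat_le_1: "av (of_nat k) \<le> 1"
proof (induction k)
  case (Suc k)
  then show ?case
    using av_add_le_max[of 1 "of_nat k"] by simp
qed simp

lemma av_sum_le: "B \<ge> 0 \<Longrightarrow> (\<And>i. i \<in> S \<Longrightarrow> av (f i) \<le> B) \<Longrightarrow> av (sum f S) \<le> B"
proof (induction S rule: infinite_finite_induct)
  case (insert x S)
  then have "av (f x) \<le> B" "av (sum f S) \<le> B"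
    by auto
  then show ?case
    using av_add_le_max[of "f x" "sum f S"] insert(1,2) by simp
qed auto

lemma av_power_diff_le:
  assumes "av u \<le> 1" "av v \<le> 1"
  shows "av (u ^ k - v ^ k) \<le> av (u - v)"
proof (induction k)
  case 0
  then show ?case
    using av_nonneg by simp
next
  case (Suc k)
  have "av (u * (u ^ k - v ^ k)) \<le> av (u - v)"
    using Suc assms mult_mono[of "av u" 1 "av (u ^ k - v ^ k)" "av (u - v)"]
    by (simp add: av_mult av_nonneg)
  moreover have "av ((u - v) * v ^ k) \<le> av (u - v)"
    using assms mult_left_le[of "av (v ^ k)" "av (u - v)"]
    by (simp add: av_mult av_power_le_1 av_nonneg)
  moreover have "u ^ Suc k - v ^ Suc k = u * (u ^ k - v ^ k) + (u - v) * v ^ k"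
    by (simp add: algebra_simps)
  ultimately show ?case
    using av_add_le_max[of "u * (u ^ k - v ^ k)" "(u - v) * v ^ k"] by simp
qed

lemma av_geometric_tail_le:
  assumes r: "0 \<le> r" "r \<le> 1" and step: "\<And>k. av (s (Suc k) - s k) \<le> r ^ Suc k" and "k \<le> m"
  shows "av (s m - s k) \<le> r ^ Suc k"
proof -
  have "av (s (k + d) - s k) \<le> r ^ Suc k" for d
  proof (induction d)
    case (Suc d)
    have "av (s (Suc (k + d)) - s (k + d)) \<le> r ^ Suc k"
      using step[of "k + d"] power_decreasing[of "Suc k" "Suc (k + d)" r] r by simp
    then show ?case
      using av_diff_trans_le[OF _ Suc] by simp
  qed (simp add: r)
  then show ?thesis
    using \<open>k \<le> m\<close> le_Suc_ex by blast
qed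

lemma eq_0_if_av_le_powers:
  assumes "r < 1" and "\<And>k. av x \<le> r ^ Suc k"
  shows "x = 0"
proof (rule ccontr)
  assume "x \<noteq> 0"
  then have "av x > 0"
    using av_nonneg[of x] by (simp add: order_less_le)
  moreover have "0 \<le> r"
    using assms(2)[of 0] av_nonneg[of x] by simp
  ultimately obtain k where "r ^ k < av x"
    using real_arch_pow_inv assms(1) by blast
  moreover have "r ^ Suc k \<le> r ^ k"
    using \<open>0 \<le> r\<close> \<open>r < 1\<close> by (simp add: mult_left_le_one_le)
  ultimately show False
    using assms(2)[of k] by simp
qed

end

locale field_hom =
  fixes g :: "'a::field \<Rightarrow> 'b::field"
  assumes map_add: "g (x + y) = g x + g y"
    and map_mult: "g (x * y) = g x * g y"
    and map_1: "g 1 = 1"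
begin

lemma map_0 [simp]: "g 0 = 0"
proof -
  have "g 0 + g 0 = g 0 + 0"
    using map_add[of 0 0] by simp
  then show ?thesis
    by (simp only: add_left_cancel)
qed

lemma map_uminus: "g (- x) = - g x"
  using map_add[of x "- x"] by (simp add: add_eq_0_iff)

lemma map_diff: "g (x - y) = g x - g y"
  using map_add[of x "- y"] by (simp add: map_uminus)

lemma map_of_nat: "g (of_nat k) = of_nat k"
  by (induction k) (simp_all add: map_add map_1)

lemma map_of_int: "g (of_int k) = of_int k"
  by (cases k rule: int_cases) (simp_all add: map_of_nat map_uminus del: of_nat_Suc)

lemma map_power: "g (x ^ k) = g x ^ k"
  by (induction k) (simp_all add: map_1 map_mult)

lemma map_inverse: "g (inverse x) = inverse (g x)"
proof (cases "x = 0")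
  case False
  then have "g x * g (inverse x) = 1"
    using map_mult[of x "inverse x"] by (simp add: map_1)
  then show ?thesis
    by (simp add: inverse_unique)
qed simp

lemma map_divide: "g (x / y) = g x / g y"
  by (simp add: divide_inverse map_mult map_inverse)

lemma map_sum: "g (sum f S) = (\<Sum>i\<in>S. g (f i))"
  by (induction S rule: infinite_finite_induct) (simp_all add: map_add)

lemma map_ipow_of_nat: "g (ipow (of_nat k) i) = ipow (of_nat k) i"
  by (simp add: ipow_def map_power map_inverse map_of_nat)

end

lemma field_hom_funpow: "field_hom (g :: 'a::field \<Rightarrow> 'a) \<Longrightarrow> field_hom (g ^^ k)"
  by (induction k) (auto simp: field_hom_def)

lemma ipow_0 [simp]: "ipow x 0 = 1"
  by (simp add: ipow_def)

lemma ipow_add_1: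
  fixes x :: "'a::field"
  assumes "x \<noteq> 0"
  shows "ipow x (i + 1) = x * ipow x i"
proof (cases "i \<ge> 0")
  case True
  then have "nat (i + 1) = Suc (nat i)"
    by simp
  then show ?thesis
    using True by (simp add: ipow_def)
next
  case False
  show ?thesis
  proof (cases "i = -1")
    case False
    then have "nat (- i) = Suc (nat (- (i + 1)))" "\<not> 0 \<le> i + 1"
      using \<open>\<not> i \<ge> 0\<close> by auto
    then show ?thesis
      using assms \<open>\<not> i \<ge> 0\<close> by (simp add: ipow_def field_simps)
  qed (use assms in \<open>simp add: ipow_def\<close>)
qed

section \<open>The Frobenius of an unramified extension has finite order\<close>

locale unramified_padic_field =
  fixes p :: nat and av :: "'k::field_char_0 \<Rightarrow> real" and \<sigma> :: "'k \<Rightarrow> 'k"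
  assumes unramified: "unramified_padic p av \<sigma>"
begin

sublocale nonarch_valued_field av
  using unramified unfolding unramified_padic_def by unfold_locales blast

sublocale sigma: field_hom \<sigma>
  using unramified unfolding unramified_padic_def by unfold_locales blast+

lemma prime_p: "prime p"
  using unramified unfolding unramified_padic_def by blast

lemma p_ge_2: "p \<ge> 2"
  using prime_p prime_ge_2_nat by blast

lemma av_of_nat_p: "av (of_nat p) = 1 / real p"
  using unramified unfolding unramified_padic_def by blast

lemma av_discrete: "x \<noteq> 0 \<Longrightarrow> \<exists>m::int. av x = real p powr of_int m"
  using unramified unfolding unramified_padic_def by blast

lemma av_complete:
  fixes X :: "nat \<Rightarrow> 'k"
  assumes "\<forall>e>0. \<exists>M. \<forall>m\<ge>M. \<forall>n\<ge>M. av (X m - X n) < e"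
  shows "\<exists>L. \<forall>e>0. \<exists>M. \<forall>n\<ge>M. av (X n - L) < e"
  using unramified assms unfolding unramified_padic_def by blast

lemma finite_residue_field: "\<exists>R. finite R \<and> (\<forall>x. av x \<le> 1 \<longrightarrow> (\<exists>r\<in>R. av (x - r) < 1))"
  using unramified unfolding unramified_padic_def by blast

lemma av_sigma: "av (\<sigma> x) = av x"
  using unramified unfolding unramified_padic_def by blast

lemma sigma_lifts_frobenius: "av x \<le> 1 \<Longrightarrow> av (\<sigma> x - x ^ p) < 1"
  using unramified unfolding unramified_padic_def by blast

lemma field_hom_sigma_funpow: "field_hom (\<sigma> ^^ k)"
  by (rule field_hom_funpow) unfold_locales

lemma av_sigma_funpow: "av ((\<sigma> ^^ k) x) = av x"
  by (induction k) (simp_all add: av_sigma)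

lemma av_less_1_imp_le: "av x < 1 \<Longrightarrow> av x \<le> 1 / real p"
proof (cases "x = 0")
  case False
  assume less: "av x < 1"
  obtain m :: int where m: "av x = real p powr of_int m"
    using av_discrete[OF False] by blast
  have p1: "real p > 1"
    using p_ge_2 by simp
  have "m < 0"
  proof (rule ccontr)
    assume "\<not> m < 0"
    then have "real p powr of_int m \<ge> 1"
      using p1 by (simp add: ge_one_powr_ge_zero)
    then show False
      using less m by simp
  qed
  then have "real p powr of_int m \<le> real p powr (- 1)"
    using p1 by (intro powr_mono) auto
  then show ?thesis
    using m p1 by (simp add: powr_minus_divide)
qed simp

lemma geometric_cauchy_limit:
  fixes s :: "nat \<Rightarrow> 'k"
  assumes r: "0 \<le> r" "r < 1" and step: "\<And>k. av (s (Suc k) - s k) \<le> r ^ Suc k"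
  shows "\<exists>L. \<forall>k. av (s k - L) \<le> r ^ Suc k"
proof -
  have near: "av (s m - s k) \<le> r ^ Suc k" if "k \<le> m" for m k
    using av_geometric_tail_le[OF r(1) _ step that] r by simp
  have "\<forall>e>0. \<exists>M. \<forall>m\<ge>M. \<forall>n\<ge>M. av (s m - s n) < e"
  proof (intro allI impI)
    fix e :: real
    assume "e > 0"
    then obtain M where M: "r ^ M < e"
      using real_arch_pow_inv r by blast
    have "av (s m - s n) \<le> r ^ Suc M" if "m \<ge> M" "n \<ge> M" for m n
      using av_diff_trans_le[OF near[OF that(1)] near[OF that(2), unfolded av_diff_commute[of "s n"]]] .
    moreover have "r ^ Suc M \<le> r ^ M"
      using power_decreasing[of M "Suc M" r] r by simp
    ultimately show "\<exists>M. \<forall>m\<ge>M. \<forall>n\<ge>M. av (s m - s n) < e"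
      using M by force
  qed
  then obtain L where L: "\<forall>e>0. \<exists>M. \<forall>n\<ge>M. av (s n - L) < e"
    using av_complete by blast
  have "av (s k - L) \<le> r ^ Suc k" for k
  proof (rule field_le_epsilon)
    fix e :: real
    assume "e > 0"
    then obtain M where "\<forall>n\<ge>M. av (s n - L) < e"
      using L by blast
    then have "av (s (max M k) - L) \<le> r ^ Suc k + e"
      using r by (simp add: add_increasing less_imp_le)
    moreover have "av (s k - s (max M k)) \<le> r ^ Suc k + e"
      using near[of k "max M k"] av_diff_commute \<open>e > 0\<close> by simp
    ultimately show "av (s k - L) \<le> r ^ Suc k + e"
      using av_diff_trans_le by blast
  qed
  then show ?thesis
    by blast
qed

lemma av_funpow_sigma_diff_power:
  assumes x: "av x \<le> 1"
  shows "av ((\<sigma> ^^ k) x - x ^ (p ^ k)) < 1"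
proof (induction k)
  case (Suc k)
  define y where "y = (\<sigma> ^^ k) x"
  have y: "av y \<le> 1"
    using x by (simp add: y_def av_sigma_funpow)
  have "av (y ^ p - (x ^ (p ^ k)) ^ p) \<le> av (y - x ^ (p ^ k))"
    using av_power_diff_le[OF y av_power_le_1[OF x]] .
  then have "av (y ^ p - (x ^ (p ^ k)) ^ p) < 1"
    using Suc.IH unfolding y_def by linarith
  moreover have "(x ^ (p ^ k)) ^ p = x ^ (p ^ Suc k)"
    by (simp add: power_mult[symmetric] mult.commute)
  ultimately show ?case
    using av_diff_trans_less[OF sigma_lifts_frobenius[OF y]] by (simp add: y_def)
qed simp

lemma av_funpow_sigma_diff_shift:
  assumes "a \<le> b"
  shows "av ((\<sigma> ^^ a) x - (\<sigma> ^^ b) x) = av ((\<sigma> ^^ (b - a)) x - x)"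
proof -
  have "(\<sigma> ^^ a) x - (\<sigma> ^^ b) x = (\<sigma> ^^ a) (x - (\<sigma> ^^ (b - a)) x)"
    using assms funpow_add[of a "b - a" \<sigma>] field_hom.map_diff[OF field_hom_sigma_funpow] by simp
  then show ?thesis
    by (simp add: av_sigma_funpow av_diff_commute)
qed

lemma residue_representatives:
  "\<exists>R \<rho>. finite R \<and> (\<forall>r\<in>R. av r \<le> 1) \<and> (\<forall>y. av y \<le> 1 \<longrightarrow> \<rho> y \<in> R \<and> av (y - \<rho> y) < 1)"
proof -
  obtain R where R: "finite R" "\<And>x. av x \<le> 1 \<Longrightarrow> \<exists>r\<in>R. av (x - r) < 1"
    using finite_residue_field by blast
  define R0 where "R0 = {r\<in>R. av r \<le> 1}"
  define \<rho> where "\<rho> y = (SOME r. r \<in> R0 \<and> av (y - r) < 1)" for y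
  have "\<rho> y \<in> R0 \<and> av (y - \<rho> y) < 1" if y: "av y \<le> 1" for y
  proof -
    obtain r where r: "r \<in> R" "av (y - r) < 1"
      using R(2)[OF y] by blast
    then have "av r \<le> 1"
      using av_diff_le_max[of y "y - r"] y by simp
    then have "r \<in> R0 \<and> av (y - r) < 1"
      using r by (simp add: R0_def)
    then show ?thesis
      unfolding \<rho>_def by (rule someI)
  qed
  moreover have "finite R0" "\<forall>r\<in>R0. av r \<le> 1"
    using R(1) by (simp_all add: R0_def)
  ultimately show ?thesis
    by blast
qed

lemma exists_funpow_sigma_congruent_id:
  "\<exists>f\<ge>1. \<forall>x. av x \<le> 1 \<longrightarrow> av ((\<sigma> ^^ f) x - x) < 1"
proof -
  obtain R0 \<rho> where R0: "finite R0" "\<And>r. r \<in> R0 \<Longrightarrow> av r \<le> 1"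
    and \<rho>: "\<And>y. av y \<le> 1 \<Longrightarrow> \<rho> y \<in> R0 \<and> av (y - \<rho> y) < 1"
    using residue_representatives by blast
  have \<rho>_sigma: "\<rho> ((\<sigma> ^^ k) r) \<in> R0 \<and> av ((\<sigma> ^^ k) r - \<rho> ((\<sigma> ^^ k) r)) < 1" if "r \<in> R0" for k r
    using \<rho> R0(2)[OF that] by (simp add: av_sigma_funpow)
  \<comment> \<open>\<sigma>^k acts on the finitely many residue classes, so two powers act alike\<close>
  define F where "F k = restrict (\<lambda>r. \<rho> ((\<sigma> ^^ k) r)) R0" for k
  have "F k \<in> R0 \<rightarrow>\<^sub>E R0" for k
    using \<rho>_sigma unfolding F_def by auto
  moreover have "finite (R0 \<rightarrow>\<^sub>E R0)"
    using R0(1) by (simp add: finite_PiE)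
  ultimately have "\<not> inj F"
    using inj_on_finite[of F UNIV "R0 \<rightarrow>\<^sub>E R0"] by auto
  then obtain a b where "a \<noteq> b" "F a = F b"
    unfolding inj_def by blast
  then obtain a b where ab: "a < b" "F a = F b"
    by (metis linorder_neqE_nat)
  show ?thesis
  proof (intro exI[of _ "b - a"] conjI allI impI)
    show "1 \<le> b - a"
      using ab by simp
    fix x :: 'k
    assume x: "av x \<le> 1"
    define r where "r = \<rho> x"
    have r: "r \<in> R0" "av (x - r) < 1"
      using \<rho>[OF x] by (auto simp: r_def)
    have x_r: "av ((\<sigma> ^^ k) x - (\<sigma> ^^ k) r) < 1" for k
      using r(2) by (simp add: av_sigma_funpow field_hom.map_diff[OF field_hom_sigma_funpow, symmetric])
    have "\<rho> ((\<sigma> ^^ a) r) = \<rho> ((\<sigma> ^^ b) r)"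
      using fun_cong[OF ab(2), of r] r(1) by (simp add: F_def)
    then have "av ((\<sigma> ^^ a) r - (\<sigma> ^^ b) r) < 1"
      using \<rho>_sigma[OF r(1), of a] \<rho>_sigma[OF r(1), of b] av_diff_commute[of "(\<sigma> ^^ b) r"]
        av_diff_trans_less[of "(\<sigma> ^^ a) r" "\<rho> ((\<sigma> ^^ a) r)" 1 "(\<sigma> ^^ b) r"] by simp
    then have "av ((\<sigma> ^^ a) x - (\<sigma> ^^ b) r) < 1"
      using av_diff_trans_less[OF x_r[of a]] by blast
    moreover have "av ((\<sigma> ^^ b) r - (\<sigma> ^^ b) x) < 1"
      using x_r[of b] by (simp add: av_diff_commute)
    ultimately have "av ((\<sigma> ^^ a) x - (\<sigma> ^^ b) x) < 1"
      by (rule av_diff_trans_less)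
    then show "av ((\<sigma> ^^ (b - a)) x - x) < 1"
      using av_funpow_sigma_diff_shift[of a b x] ab(1) by simp
  qed
qed

lemma av_of_nat_choose_le:
  assumes "0 < k" "k < p"
  shows "av (of_nat (p choose k) :: 'k) \<le> 1 / real p"
proof -
  have "p dvd (p choose k)"
    using assms prime_p by (intro dvd_choose_prime) auto
  then obtain c where "p choose k = p * c"
    by blast
  then show ?thesis
    using av_of_nat_le_1[of c] p_ge_2 by (simp add: av_mult av_of_nat_p divide_right_mono)
qed

lemma av_binomial_term_le:
  assumes k: "k \<in> {1..p}" and d: "av d \<le> 1 / real p"
  shows "av (of_nat (p choose k) * d ^ k) \<le> 1 / real p * av d"
proof -
  define r where "r = 1 / real p"
  define D where "D = av d"
  have r: "0 \<le> r" "r \<le> 1"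
    using p_ge_2 by (auto simp: r_def)
  have D: "0 \<le> D" "D \<le> r"
    using d av_nonneg by (auto simp: D_def r_def)
  \<comment> \<open>the middle binomial coefficients contribute a factor p, the last term the square D^p \<le> D^2\<close>
  have "av (of_nat (p choose k) :: 'k) * D ^ k \<le> r * D"
  proof (cases "k = p")
    case True
    have "D ^ p \<le> D ^ 2"
      using power_decreasing[of 2 p D] p_ge_2 D r by simp
    also have "\<dots> \<le> r * D"
      using D by (simp add: power2_eq_square mult_right_mono)
    finally show ?thesis
      using True by simp
  next
    case False
    have "D ^ k \<le> D"
      using power_decreasing[of 1 k D] k D r by simp
    moreover have "av (of_nat (p choose k) :: 'k) \<le> r"
      using av_of_nat_choose_le[of k] k False by (simp add: r_def)
    ultimately show ?thesis
      using D r by (intro mult_mono) auto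
  qed
  then show ?thesis
    by (simp add: av_mult av_power D_def r_def)
qed

lemma av_power_p_diff_le:
  assumes u: "av u \<le> 1" and v: "av v \<le> 1" and uv: "av (u - v) \<le> (1 / real p) ^ Suc m"
  shows "av (u ^ p - v ^ p) \<le> (1 / real p) ^ Suc (Suc m)"
proof -
  define r where "r = 1 / real p"
  have r: "0 \<le> r" "r \<le> 1"
    using p_ge_2 by (auto simp: r_def)
  have "av (u - v) \<le> r"
    using uv r power_decreasing[of 1 "Suc m" r] by (simp add: r_def)
  have "u ^ p = (\<Sum>k\<le>p. of_nat (p choose k) * (u - v) ^ k * v ^ (p - k))"
    using binomial_ring[of "u - v" v p] by simp
  also have "{..p} = insert 0 {1..p}"
    by auto
  finally have expand: "u ^ p - v ^ p = (\<Sum>k\<in>{1..p}. of_nat (p choose k) * (u - v) ^ k * v ^ (p - k))"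
    by simp
  have "av (of_nat (p choose k) * (u - v) ^ k) * av (v ^ (p - k)) \<le> r * r ^ Suc m" if "k \<in> {1..p}" for k
  proof -
    have "av (of_nat (p choose k) * (u - v) ^ k) \<le> r * r ^ Suc m"
      using av_binomial_term_le[OF that \<open>av (u - v) \<le> r\<close>[unfolded r_def]] uv r
        mult_left_mono[of "av (u - v)" "r ^ Suc m" r] by (simp add: r_def)
    then show ?thesis
      using av_power_le_1[OF v, of "p - k"] r mult_mono[of _ "r * r ^ Suc m" _ 1]
      by (fastforce simp: av_nonneg)
  qed
  then show ?thesis
    unfolding expand r_def using r by (intro av_sum_le) (auto simp: r_def av_mult)
qed

lemma av_power_p_power_diff_le:
  assumes "f \<ge> 1" and u: "av u \<le> 1" and v: "av v \<le> 1" and uv: "av (u - v) \<le> (1 / real p) ^ Suc m"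
  shows "av (u ^ (p ^ f) - v ^ (p ^ f)) \<le> (1 / real p) ^ Suc (Suc m)"
proof -
  have "p ^ f = p * p ^ (f - 1)"
    using \<open>f \<ge> 1\<close> by (simp add: power_eq_if)
  then have "av (u ^ (p ^ f) - v ^ (p ^ f)) \<le> av (u ^ p - v ^ p)"
    using av_power_diff_le[OF av_power_le_1[OF u] av_power_le_1[OF v]] by (simp add: power_mult)
  then show ?thesis
    using av_power_p_diff_le[OF u v uv] by linarith
qed

lemma teichmuller_eq:
  assumes "f \<ge> 1" and u: "av u \<le> 1" "u ^ (p ^ f) = u" and v: "av v \<le> 1" "v ^ (p ^ f) = v"
    and uv: "av (u - v) < 1"
  shows "u = v"
proof -
  have "av (u - v) \<le> (1 / real p) ^ Suc k" for k
  proof (induction k)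
    case 0
    then show ?case
      using av_less_1_imp_le[OF uv] by simp
  next
    case (Suc k)
    then show ?case
      using av_power_p_power_diff_le[OF \<open>f \<ge> 1\<close> u(1) v(1)] u(2) v(2) by simp
  qed
  then show ?thesis
    using eq_0_if_av_le_powers[of "1 / real p" "u - v"] p_ge_2 by simp
qed

context
  fixes f :: nat
  assumes f: "f \<ge> 1" and congruent_id: "\<forall>x. av x \<le> 1 \<longrightarrow> av ((\<sigma> ^^ f) x - x) < 1"
begin

interpretation sigma_f: field_hom "\<sigma> ^^ f"
  by (rule field_hom_sigma_funpow)

lemma av_teichmuller_sequence_step:
  assumes x: "av x \<le> 1"
  shows "av (x ^ ((p ^ f) ^ Suc k) - x ^ ((p ^ f) ^ k)) \<le> (1 / real p) ^ Suc k"
proof (induction k)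
  case 0
  have "av (x ^ (p ^ f) - (\<sigma> ^^ f) x) < 1"
    using av_funpow_sigma_diff_power[OF x, of f] av_diff_commute by simp
  moreover have "av ((\<sigma> ^^ f) x - x) < 1"
    using congruent_id x by blast
  ultimately have "av (x ^ (p ^ f) - x) < 1"
    by (rule av_diff_trans_less)
  then show ?case
    using av_less_1_imp_le by simp
next
  case (Suc k)
  have e: "x ^ ((p ^ f) ^ Suc m) = (x ^ ((p ^ f) ^ m)) ^ (p ^ f)" for m
    by (simp add: power_mult[symmetric] mult.commute)
  have "av ((x ^ ((p ^ f) ^ k)) ^ (p ^ f) - x ^ ((p ^ f) ^ k)) \<le> (1 / real p) ^ Suc k"
    using Suc.IH by (simp only: e)
  then have "av (((x ^ ((p ^ f) ^ k)) ^ (p ^ f)) ^ (p ^ f) - (x ^ ((p ^ f) ^ k)) ^ (p ^ f))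
      \<le> (1 / real p) ^ Suc (Suc k)"
    by (rule av_power_p_power_diff_le[OF f av_power_le_1[OF av_power_le_1[OF x]] av_power_le_1[OF x]])
  then show ?case
    by (simp only: e)
qed

lemma teichmuller_lift_exists:
  assumes x: "av x \<le> 1"
  shows "\<exists>\<tau>. av \<tau> \<le> 1 \<and> \<tau> ^ (p ^ f) = \<tau> \<and> av (\<tau> - x) < 1"
proof -
  define r where "r = 1 / real p"
  have r: "0 \<le> r" "r < 1"
    using p_ge_2 by (auto simp: r_def)
  define s where "s k = x ^ ((p ^ f) ^ k)" for k
  have s_int: "av (s k) \<le> 1" for k
    unfolding s_def using av_power_le_1[OF x] .
  have s_Suc: "s (Suc k) = s k ^ (p ^ f)" for k
    by (simp add: s_def power_mult[symmetric] mult.commute)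
  have "av (s (Suc k) - s k) \<le> r ^ Suc k" for k
    unfolding s_def r_def by (rule av_teichmuller_sequence_step[OF x])
  then obtain \<tau> where \<tau>: "\<And>k. av (s k - \<tau>) \<le> r ^ Suc k"
    using geometric_cauchy_limit[OF r] by blast
  have "av (\<tau> - x) < 1"
    using \<tau>[of 0] r av_diff_commute by (simp add: s_def)
  moreover have \<tau>_int: "av \<tau> \<le> 1"
    using \<tau>[of 0] r av_diff_le_max[of x "x - \<tau>"] x by (simp add: s_def)
  moreover have "\<tau> ^ (p ^ f) = \<tau>"
  proof -
    have "av (\<tau> ^ (p ^ f) - \<tau>) \<le> r ^ Suc k" for k
    proof (rule av_diff_trans_le)
      show "av (\<tau> ^ (p ^ f) - s (Suc k)) \<le> r ^ Suc k"
        using av_power_diff_le[OF \<tau>_int s_int, of "p ^ f" k] \<tau>[of k] av_diff_commute s_Suc by simp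
      have "r ^ Suc (Suc k) \<le> r ^ Suc k"
        using r by (simp add: mult_left_le_one_le)
      then show "av (s (Suc k) - \<tau>) \<le> r ^ Suc k"
        using \<tau>[of "Suc k"] by linarith
    qed
    then have "\<tau> ^ (p ^ f) - \<tau> = 0"
      using eq_0_if_av_le_powers[of r] r by blast
    then show ?thesis
      by simp
  qed
  ultimately show ?thesis
    by blast
qed

lemma av_funpow_sigma_diff_le_powers:
  assumes "av x \<le> 1"
  shows "av ((\<sigma> ^^ f) x - x) \<le> (1 / real p) ^ k"
  using assms
proof (induction k arbitrary: x)
  case 0
  then show ?case
    using av_diff_le_max[of "(\<sigma> ^^ f) x" x] by (simp add: av_sigma_funpow)
next
  case (Suc k)
  obtain \<tau> where \<tau>: "av \<tau> \<le> 1" "\<tau> ^ (p ^ f) = \<tau>" "av (\<tau> - x) < 1"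
    using teichmuller_lift_exists[OF Suc.prems] by blast
  \<comment> \<open>Teichmueller representatives are fixed, so x - \<tau> = p x' pushes the error one power of p down\<close>
  have "(\<sigma> ^^ f) \<tau> = \<tau>"
  proof (rule teichmuller_eq[OF f])
    show "av ((\<sigma> ^^ f) \<tau>) \<le> 1" "av ((\<sigma> ^^ f) \<tau> - \<tau>) < 1"
      using \<tau>(1) congruent_id by (simp_all add: av_sigma_funpow)
    show "(\<sigma> ^^ f) \<tau> ^ (p ^ f) = (\<sigma> ^^ f) \<tau>"
      using \<tau>(2) by (metis sigma_f.map_power)
  qed (use \<tau> in auto)
  define x' where "x' = (x - \<tau>) / of_nat p"
  have "av (x - \<tau>) \<le> 1 / real p"
    using av_less_1_imp_le \<tau>(3) av_diff_commute by simp
  then have "av x' \<le> 1"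
    using p_ge_2 by (simp add: x'_def av_divide av_of_nat_p field_simps)
  moreover have "x = \<tau> + of_nat p * x'"
    using p_ge_2 by (simp add: x'_def)
  then have "(\<sigma> ^^ f) x - x = of_nat p * ((\<sigma> ^^ f) x' - x')"
    using \<open>(\<sigma> ^^ f) \<tau> = \<tau>\<close> by (simp add: sigma_f.map_add sigma_f.map_mult sigma_f.map_of_nat algebra_simps)
  ultimately show ?case
    using Suc.IH[of x'] p_ge_2 by (simp add: av_mult av_of_nat_p divide_right_mono)
qed

lemma funpow_sigma_eq_id: "(\<sigma> ^^ f) x = x"
proof -
  have integral: "(\<sigma> ^^ f) y = y" if "av y \<le> 1" for y
  proof -
    have "(\<sigma> ^^ f) y - y = 0"
    proof (rule eq_0_if_av_le_powers)
      show "1 / real p < 1"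
        using p_ge_2 by simp
    qed (rule av_funpow_sigma_diff_le_powers[OF that])
    then show ?thesis
      by simp
  qed
  show ?thesis
  proof (cases "av x \<le> 1")
    case False
    then have "av (inverse x) \<le> 1"
      by (simp add: av_inverse inverse_le_1_iff)
    then show ?thesis
      using integral[of "inverse x"] sigma_f.map_inverse by (metis inverse_inverse_eq)
  qed (rule integral)
qed

end

lemma sigma_finite_order: "\<exists>f\<ge>1. \<forall>x. (\<sigma> ^^ f) x = x"
  using exists_funpow_sigma_congruent_id funpow_sigma_eq_id by blast

section \<open>\<sigma>-semilinear equations\<close>

text \<open>
  frob_order is some period of \<sigma>, not necessarily [K_0 : \<rat>_p]; frob_trace is then a multiple
  of the trace to \<rat>_p, which is all that is needed.
\<close>

definition frob_order :: nat where
  "frob_order = (SOME f. f \<ge> 1 \<and> (\<forall>x. (\<sigma> ^^ f) x = x))"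

lemma frob_order_ge_1: "frob_order \<ge> 1"
  and funpow_frob_order: "(\<sigma> ^^ frob_order) x = x"
  using someI_ex[OF sigma_finite_order] unfolding frob_order_def by blast+

definition frob_trace :: "'k \<Rightarrow> 'k" where
  "frob_trace z = (\<Sum>m<frob_order. (\<sigma> ^^ m) z)"

lemma frob_trace_0 [simp]: "frob_trace 0 = 0"
  by (simp add: frob_trace_def field_hom.map_0[OF field_hom_sigma_funpow])

lemma sum_funpow_sigma_diff: "(\<Sum>m<k. (\<sigma> ^^ Suc m) z - (\<sigma> ^^ m) z) = (\<sigma> ^^ k) z - z"
  using sum_lessThan_telescope[of "\<lambda>m. (\<sigma> ^^ m) z" k] by (simp del: funpow.simps)

lemma frob_trace_sigma_diff: "frob_trace (\<sigma> b - b) = 0"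
proof -
  have "frob_trace (\<sigma> b - b) = (\<Sum>m<frob_order. (\<sigma> ^^ Suc m) b - (\<sigma> ^^ m) b)"
    unfolding frob_trace_def
    by (simp add: field_hom.map_diff[OF field_hom_sigma_funpow] funpow_Suc_right del: funpow.simps)
  then show ?thesis
    by (simp add: sum_funpow_sigma_diff funpow_frob_order del: funpow.simps)
qed

lemma frob_trace_int_comb:
  "frob_trace (\<Sum>k<N. of_int (A k) * v k) = (\<Sum>k<N. of_int (A k) * frob_trace (v k))"
  unfolding frob_trace_def
  by (simp add: field_hom.map_sum[OF field_hom_sigma_funpow] field_hom.map_mult[OF field_hom_sigma_funpow]
      field_hom.map_of_int[OF field_hom_sigma_funpow] sum_distrib_left sum.swap[of _ "{..<frob_order}"])

lemma sigma_diff_eq_if_frob_trace_eq_0: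
  assumes "frob_trace z = 0"
  shows "\<exists>x. \<sigma> x - x = z"
proof
  define f where "f = frob_order"
  \<comment> \<open>the classical witness for additive Hilbert 90\<close>
  define S where "S = (\<Sum>m<f. \<Sum>l<m. (\<sigma> ^^ l) z)"
  have "\<sigma> S - S = (\<Sum>m<f. \<Sum>l<m. (\<sigma> ^^ Suc l) z - (\<sigma> ^^ l) z)"
    by (simp add: S_def sigma.map_sum sum_subtractf)
  also have "\<dots> = (\<Sum>m<f. (\<sigma> ^^ m) z - z)"
    by (simp add: sum_funpow_sigma_diff del: funpow.simps)
  also have "\<dots> = - of_nat f * z"
    using assms by (simp add: sum_subtractf frob_trace_def f_def)
  finally have S: "\<sigma> S - S = - of_nat f * z" .
  have "of_nat f \<noteq> (0 :: 'k)"
    using frob_order_ge_1 by (simp add: f_def)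
  have "\<sigma> (- S / of_nat f) - (- S / of_nat f) = - (\<sigma> S - S) / of_nat f"
    by (simp add: sigma.map_divide sigma.map_uminus sigma.map_of_nat diff_divide_distrib)
  also have "\<dots> = z"
    using S \<open>of_nat f \<noteq> 0\<close> by simp
  finally show "\<sigma> (- S / of_nat f) - (- S / of_nat f) = z" .
qed

lemma av_ipow_p_neq_1:
  assumes "i \<noteq> 0"
  shows "av (ipow (of_nat p) i) \<noteq> 1"
proof -
  have "(1 / real p) ^ k \<noteq> 1" if "k > 0" for k
    using p_ge_2 that power_less_one_iff[of "1 / real p" k] by simp
  then show ?thesis
    using assms by (simp add: ipow_def av_power av_inverse av_of_nat_p)
qed

lemma scaled_sigma_fixed_eq_0:
  assumes "av c \<noteq> 1" and "c * \<sigma> x = x"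
  shows "x = 0"
proof -
  have "av c * av x = av x"
    using assms(2) av_mult[of c "\<sigma> x"] by (simp add: av_sigma)
  then show ?thesis
    using assms(1) by simp
qed

lemma ipow_p_add_1: "ipow (of_nat p :: 'k) (i + 1) = of_nat p * ipow (of_nat p) i"
  using p_ge_2 ipow_add_1[of "of_nat p :: 'k" i] by simp

lemma p_mult_ipow_p_minus_1: "of_nat p * ipow (of_nat p :: 'k) (-1) = 1"
  using ipow_p_add_1[of "-1"] by simp

lemma ipow_p_sigma_fixed_eq_0:
  assumes "i \<noteq> 0" "ipow (of_nat p) i * \<sigma> x = x"
  shows "x = 0"
  using scaled_sigma_fixed_eq_0 av_ipow_p_neq_1 assms by blast

lemma scaled_sigma_diff_surj:
  assumes c: "\<sigma> c = c" "av c \<noteq> 1"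
  shows "\<exists>x. c * \<sigma> x - x = z"
proof
  define f where "f = frob_order"
  define S where "S = (\<Sum>m<f. c ^ m * (\<sigma> ^^ m) z)"
  have "c * \<sigma> S - S = (\<Sum>m<f. c ^ Suc m * (\<sigma> ^^ Suc m) z - c ^ m * (\<sigma> ^^ m) z)"
    using c(1) by (simp add: S_def sigma.map_sum sigma.map_mult sigma.map_power sum_distrib_left
        sum_subtractf mult.assoc)
  also have "\<dots> = (c ^ f - 1) * z"
    using sum_lessThan_telescope[of "\<lambda>m. c ^ m * (\<sigma> ^^ m) z" f]
    by (simp add: f_def funpow_frob_order algebra_simps del: funpow.simps)
  finally have S: "c * \<sigma> S - S = (c ^ f - 1) * z" .
  have "av c ^ f \<noteq> 1"
    using c(2) frob_order_ge_1 power_eq_1_iff[of "av c" f] av_nonneg[of c] by (auto simp: f_def)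
  then have "c ^ f - 1 \<noteq> 0"
    using av_power[of c f] by auto
  have "c * \<sigma> (S / (c ^ f - 1)) - S / (c ^ f - 1) = (c * \<sigma> S - S) / (c ^ f - 1)"
    using c(1) by (simp add: sigma.map_divide sigma.map_diff sigma.map_power sigma.map_1
        diff_divide_distrib times_divide_eq_right)
  also have "\<dots> = z"
    using S \<open>c ^ f - 1 \<noteq> 0\<close> by simp
  finally show "c * \<sigma> (S / (c ^ f - 1)) - S / (c ^ f - 1) = z" .
qed

end

section \<open>The complex\<close>

lemma ND_zero [simp]: "ND n Nm (\<lambda>i j. 0 :: 'k::field) = (\<lambda>i j. 0)"
  by (simp add: ND_def fun_eq_iff)

lemma ND_minus_1:
  "ND n Nm x (-1) j = (if j < n (-1) then \<Sum>k<n 0. of_int (Nm 0 j k) * x 0 k else 0)"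
  by (simp add: ND_def)

lemma ND_TQp0_eq_0:
  assumes "t \<in> TQp n \<sigma> 0" "i \<noteq> -1"
  shows "ND n Nm t i j = 0"
  using assms by (simp add: ND_def TQp_def)

lemma ND_add: "ND n Nm (\<lambda>i j. x i j + y i j) i j = ND n Nm x i j + ND n Nm y i j"
  by (simp add: ND_def sum.distrib algebra_simps)

lemma TQp_restrict: "u \<in> TQp n \<sigma> i \<Longrightarrow> (\<lambda>i' j. if i' = i then u i' j else 0) = u"
  by (auto simp: TQp_def fun_eq_iff)

lemma int_matrix_injective_over_field:
  fixes A :: "nat \<Rightarrow> nat \<Rightarrow> int" and v :: "nat \<Rightarrow> 'k::field_char_0"
  assumes inj_rat: "\<forall>w::nat \<Rightarrow> rat. (\<forall>j<m. (\<Sum>k<n. of_int (A j k) * w k) = 0) \<longrightarrow> (\<forall>k<n. w k = 0)"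
    and Av: "\<forall>j<m. (\<Sum>k<n. of_int (A j k) * v k) = 0" and k: "k < n"
  shows "v k = 0"
proof (rule ccontr)
  assume nz: "v k \<noteq> 0"
  interpret vp: vector_space_pair "\<lambda>q (x::'k). of_rat q * x" "(*) :: rat \<Rightarrow> rat \<Rightarrow> rat"
    by unfold_locales (auto simp: algebra_simps of_rat_add of_rat_mult)
  \<comment> \<open>a \<rat>-linear functional with l (v k) = 1 turns v into a rational solution\<close>
  have ind: "vp.vs1.independent {v k}"
    using nz by (simp add: vp.vs1.independent_insert)
  define l where "l = vp.construct {v k} (\<lambda>_. 1)"
  have lin: "Vector_Spaces.linear (\<lambda>q (x::'k). of_rat q * x) (*) l"
    unfolding l_def by (rule vp.linear_construct[OF ind])
  have l_vk: "l (v k) = 1"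
    unfolding l_def by (rule vp.construct_basis[OF ind]) simp
  have l_int: "l (of_int c * x) = of_int c * l x" for c x
    using vp.linear_scale[OF lin, of "of_int c" x] by simp
  have l_comb: "l (\<Sum>i\<in>S. of_int (c i) * x i) = (\<Sum>i\<in>S. of_int (c i) * l (x i))" for S c x
    by (simp add: vp.linear_sum[OF lin] l_int)
  have "(\<Sum>i<n. of_int (A j i) * l (v i)) = l (\<Sum>i<n. of_int (A j i) * v i)" for j
    by (rule l_comb[symmetric])
  then have "\<forall>j<m. (\<Sum>i<n. of_int (A j i) * l (v i)) = 0"
    using Av vp.linear_0[OF lin] by simp
  then have "l (v k) = 0"
    using inj_rat[rule_format, of "\<lambda>i. l (v i)"] k by blast
  then show False
    using l_vk by simp
qed

locale semistable_complex = unramified_padic_field p av \<sigma> + iota: field_hom \<iota>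
  for p :: nat and av :: "'k::field_char_0 \<Rightarrow> real" and \<sigma> :: "'k \<Rightarrow> 'k" and \<iota> :: "'k \<Rightarrow> 'K::field" +
  fixes n :: "int \<Rightarrow> nat" and Nm :: "int \<Rightarrow> nat \<Rightarrow> nat \<Rightarrow> int" and F :: "int \<Rightarrow> (int \<Rightarrow> nat \<Rightarrow> 'K) set"
  assumes N_injective: "\<forall>v::nat \<Rightarrow> rat. (\<forall>j<n (-1). (\<Sum>k<n 0. of_int (Nm 0 j k) * v k) = 0)
                  \<longrightarrow> (\<forall>k<n 0. v k = 0)"
    and zero_in_F0: "(\<lambda>i j. 0) \<in> F 0"
begin

lemma phiD_fixed_imp_TQp0:
  assumes x: "x \<in> Dsp n" and fixed: "\<And>i j. phiD p \<sigma> x i j = x i j"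
  shows "x \<in> TQp n \<sigma> 0"
  using x fixed[of 0] ipow_p_sigma_fixed_eq_0 fixed unfolding TQp_def phiD_def by auto

lemma TQp0_phiD_fixed: "t \<in> TQp n \<sigma> 0 \<Longrightarrow> phiD p \<sigma> t i j = t i j"
  by (cases "i = 0") (auto simp: TQp_def phiD_def)

lemma ND_minus1_eq_0_imp_eq_0:
  fixes x :: "int \<Rightarrow> nat \<Rightarrow> 'k"
  assumes x: "x \<in> Dsp n" and Nx: "\<And>j. ND n Nm x (-1) j = 0"
  shows "x 0 k = 0"
proof (cases "k < n 0")
  case True
  have "(\<Sum>k<n 0. of_int (Nm 0 j k) * x 0 k) = 0" if "j < n (-1)" for j
    using Nx[of j] that by (simp add: ND_minus_1)
  then have "\<forall>j<n (-1). (\<Sum>k<n 0. of_int (Nm 0 j k) * x 0 k) = 0"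
    by blast
  from int_matrix_injective_over_field[OF N_injective this True] show ?thesis .
next
  case False
  then show ?thesis
    using x by (simp add: Dsp_def)
qed

lemma cocycle_0yc_components:
  assumes "cocycle n Nm p \<sigma> (\<lambda>i j. 0) y c"
  shows "i \<noteq> -1 \<Longrightarrow> y i j = 0" and "\<sigma> (y (-1) j) = y (-1) j"
proof -
  have "y i j = of_nat p * (ipow (of_nat p) i * \<sigma> (y i j))" for i j
    using assms by (simp add: cocycle_def phiD_def)
  then have fixed: "ipow (of_nat p) (i + 1) * \<sigma> (y i j) = y i j" for i j
    by (simp add: ipow_p_add_1 mult.assoc)
  show "y i j = 0" if "i \<noteq> -1"
    by (rule ipow_p_sigma_fixed_eq_0[OF _ fixed[of i j]]) (use that in simp)
  show "\<sigma> (y (-1) j) = y (-1) j"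
    using fixed[of "-1" j] by (simp add: ipow_def)
qed

lemma cocycle_0_0: "c \<in> Dsp n \<Longrightarrow> cocycle n Nm p \<sigma> (\<lambda>i j. 0) (\<lambda>i j. 0) c"
  by (simp add: cocycle_def phiD_def Dsp_def)

lemma ND_phiD_commute: "of_nat p * phiD p \<sigma> (ND n Nm x) i j = ND n Nm (phiD p \<sigma> x) i j"
  unfolding ND_def phiD_def ipow_p_add_1
  by (simp add: sigma.map_sum sigma.map_mult sigma.map_of_int
      sum_distrib_left algebra_simps)

lemma phiD_minus_id_surj:
  assumes a: "a \<in> Dsp n" and trace_0: "\<And>k. frob_trace (a 0 k) = 0"
  shows "\<exists>x\<in>Dsp n. \<forall>i j. a i j = phiD p \<sigma> x i j - x i j"
proof -
  have "\<exists>s. ipow (of_nat p) i * \<sigma> s - s = a i j" for i j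
  proof (cases "i = 0")
    case True
    then show ?thesis
      using sigma_diff_eq_if_frob_trace_eq_0[OF trace_0[of j]] by simp
  next
    case False
    then show ?thesis
      using scaled_sigma_diff_surj[OF sigma.map_ipow_of_nat av_ipow_p_neq_1[OF False]] by blast
  qed
  then obtain s where s: "\<And>i j. ipow (of_nat p) i * \<sigma> (s i j) - s i j = a i j"
    by metis
  define x where "x i j = (if j < n i then s i j else 0)" for i j
  have "x \<in> Dsp n"
    by (simp add: x_def Dsp_def)
  moreover have "a i j = phiD p \<sigma> x i j - x i j" for i j
    using s[of i j] a by (auto simp: x_def phiD_def Dsp_def)
  ultimately show ?thesis
    by blast
qed

lemma cocycle_frob_trace_a0_eq_0:
  assumes "cocycle n Nm p \<sigma> a b c"
  shows "frob_trace (a 0 k) = 0"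
proof (rule ND_minus1_eq_0_imp_eq_0)
  show "(\<lambda>i k. frob_trace (a i k)) \<in> Dsp n"
    using assms by (simp add: cocycle_def Dsp_def)
  have cond: "ND n Nm a (-1) j + b (-1) j - of_nat p * phiD p \<sigma> b (-1) j = 0" for j
    using assms by (simp add: cocycle_def)
  have "ND n Nm a (-1) j = \<sigma> (b (-1) j) - b (-1) j" for j
    using cond[of j] p_mult_ipow_p_minus_1 by (simp add: phiD_def mult.assoc[symmetric] algebra_simps)
  then have trace_Na: "frob_trace (ND n Nm a (-1) j) = 0" for j
    by (simp add: frob_trace_sigma_diff)
  show "ND n Nm (\<lambda>i k. frob_trace (a i k)) (-1) j = 0" for j
    using trace_Na[of j] by (simp add: ND_minus_1 frob_trace_int_comb split: if_splits)
qed

lemma cocycle_cohomologous_to_0yc: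
  assumes "cocycle n Nm p \<sigma> a b c"
  shows "\<exists>y c'. cocycle n Nm p \<sigma> (\<lambda>i j. 0) y c' \<and> cohomologous n Nm p \<sigma> \<iota> (F 0) a b c (\<lambda>i j. 0) y c'"
proof -
  have D: "a \<in> Dsp n" "b \<in> Dsp n" "c \<in> Dsp n"
    and cond: "\<And>i j. ND n Nm a i j + b i j - of_nat p * phiD p \<sigma> b i j = 0"
    using assms by (auto simp: cocycle_def)
  obtain x where x: "x \<in> Dsp n" "\<And>i j. a i j = phiD p \<sigma> x i j - x i j"
    using phiD_minus_id_surj[OF D(1) cocycle_frob_trace_a0_eq_0[OF assms]] by blast
  define y where "y i j = b i j - ND n Nm x i j" for i j
  define c' where "c' i j = c i j + extK \<iota> x i j" for i j
  have "of_nat p * phiD p \<sigma> (ND n Nm x) i j = ND n Nm a i j + ND n Nm x i j" for i j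
  proof -
    have "phiD p \<sigma> x = (\<lambda>i j. a i j + x i j)"
      using x(2) by (simp add: fun_eq_iff)
    then show ?thesis
      by (simp add: ND_phiD_commute ND_add)
  qed
  then have "cocycle n Nm p \<sigma> (\<lambda>i j. 0) y c'"
    using D x(1) cond by (auto simp: cocycle_def Dsp_def y_def c'_def extK_def ND_def phiD_def
        sigma.map_diff algebra_simps)
  moreover have "cohomologous n Nm p \<sigma> \<iota> (F 0) a b c (\<lambda>i j. 0) y c'"
    unfolding cohomologous_def coboundary_def
    using x zero_in_F0 by (intro bexI[of _ x] bexI[of _ "\<lambda>i j. 0"]) (auto simp: y_def c'_def)
  ultimately show ?thesis
    by blast
qed

lemma cohomologous_0_0_iff:
  assumes "c \<in> Dsp n" "c' \<in> Dsp n"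
  shows "cohomologous n Nm p \<sigma> \<iota> (F 0) (\<lambda>i j. 0) (\<lambda>i j. 0) c (\<lambda>i j. 0) (\<lambda>i j. 0) c'
        \<longleftrightarrow> (\<lambda>i j. c i j - c' i j) \<in> F 0"
proof
  assume "cohomologous n Nm p \<sigma> \<iota> (F 0) (\<lambda>i j. 0) (\<lambda>i j. 0) c (\<lambda>i j. 0) (\<lambda>i j. 0) c'"
  then obtain x g where x: "x \<in> Dsp n" "\<And>i j. phiD p \<sigma> x i j = x i j" "\<And>i j. ND n Nm x i j = 0"
    and g: "g \<in> F 0" "\<And>i j. c i j - c' i j = - extK \<iota> x i j + g i j"
    unfolding cohomologous_def coboundary_def by (metis diff_self eq_iff_diff_eq_0)
  \<comment> \<open>x is a \<phi>-fixed vector in T^0 \<otimes> \<rat>_p killed by N, hence zero by injectivity of N\<close>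
  have "x i j = 0" for i j
    using phiD_fixed_imp_TQp0[OF x(1,2)] ND_minus1_eq_0_imp_eq_0[OF x(1,3)] by (cases "i = 0") (auto simp: TQp_def)
  then have "(\<lambda>i j. c i j - c' i j) = g"
    using g(2) by (simp add: extK_def fun_eq_iff)
  then show "(\<lambda>i j. c i j - c' i j) \<in> F 0"
    using g(1) by simp
next
  assume "(\<lambda>i j. c i j - c' i j) \<in> F 0"
  then show "cohomologous n Nm p \<sigma> \<iota> (F 0) (\<lambda>i j. 0) (\<lambda>i j. 0) c (\<lambda>i j. 0) (\<lambda>i j. 0) c'"
    unfolding cohomologous_def coboundary_def
    by (intro bexI[of _ "\<lambda>i j. 0"] bexI[of _ "\<lambda>i j. c i j - c' i j"]) (auto simp: phiD_def extK_def Dsp_def)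
qed

lemma cocycle_0yc_decomposition:
  assumes "cocycle n Nm p \<sigma> (\<lambda>i j. 0) y c"
  shows "(\<lambda>i j. if i = -1 then y i j else 0) \<in> TQp n \<sigma> (-1)"
    and "coboundary n Nm p \<sigma> \<iota> (F 0) (\<lambda>i j. 0) (\<lambda>i j. if i = -1 then 0 else y i j) (\<lambda>i j. 0)"
proof -
  have y: "y \<in> Dsp n"
    using assms by (simp add: cocycle_def)
  show "(\<lambda>i j. if i = -1 then y i j else 0) \<in> TQp n \<sigma> (-1)"
    using y cocycle_0yc_components[OF assms] by (auto simp: TQp_def Dsp_def)
  show "coboundary n Nm p \<sigma> \<iota> (F 0) (\<lambda>i j. 0) (\<lambda>i j. if i = -1 then 0 else y i j) (\<lambda>i j. 0)"
    unfolding coboundary_def using cocycle_0yc_components(1)[OF assms] zero_in_F0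
    by (intro bexI[of _ "\<lambda>i j. 0"]) (auto simp: phiD_def extK_def Dsp_def)
qed

lemma cohomologous_0yc_invariants:
  assumes "cohomologous n Nm p \<sigma> \<iota> (F 0) (\<lambda>i j. 0) y c (\<lambda>i j. 0) y' c'"
  shows "\<exists>t\<in>TQp n \<sigma> 0. \<forall>j. y (-1) j - y' (-1) j = ND n Nm t (-1) j"
    and "\<exists>g\<in>F 0. \<exists>t\<in>TQp n \<sigma> 0. \<forall>i j. c i j - c' i j = g i j + extK \<iota> t i j"
proof -
  obtain x g where x: "x \<in> Dsp n" "\<And>i j. phiD p \<sigma> x i j = x i j"
    and y: "\<And>i j. y i j - y' i j = ND n Nm x i j"
    and g: "g \<in> F 0" "\<And>i j. c i j - c' i j = - extK \<iota> x i j + g i j"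
    using assms unfolding cohomologous_def coboundary_def by (metis diff_self eq_iff_diff_eq_0)
  have t: "x \<in> TQp n \<sigma> 0"
    using phiD_fixed_imp_TQp0[OF x] .
  then show "\<exists>t\<in>TQp n \<sigma> 0. \<forall>j. y (-1) j - y' (-1) j = ND n Nm t (-1) j"
    using y by blast
  have "(\<lambda>i j. - x i j) \<in> TQp n \<sigma> 0"
    using t by (auto simp: TQp_def Dsp_def sigma.map_uminus)
  moreover have "\<forall>i j. c i j - c' i j = g i j + extK \<iota> (\<lambda>i j. - x i j) i j"
    using g(2) by (simp add: extK_def iota.map_uminus)
  ultimately show "\<exists>g\<in>F 0. \<exists>t\<in>TQp n \<sigma> 0. \<forall>i j. c i j - c' i j = g i j + extK \<iota> t i j"
    using g(1) by blast
qed

lemma TQp_minus1_cocycle: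
  assumes "u \<in> TQp n \<sigma> (-1)"
  shows "cocycle n Nm p \<sigma> (\<lambda>i j. 0) u (\<lambda>i j. 0)"
proof -
  have "u i j - of_nat p * phiD p \<sigma> u i j = 0" for i j
    using assms p_mult_ipow_p_minus_1 by (cases "i = -1") (auto simp: TQp_def phiD_def mult.assoc[symmetric])
  then show ?thesis
    using assms by (simp add: cocycle_def TQp_def Dsp_def)
qed

lemma cocycle_0yc_trivial_iff:
  assumes "cocycle n Nm p \<sigma> (\<lambda>i j. 0) y c"
  shows "(\<exists>t\<in>TQp n \<sigma> 0. \<forall>j. y (-1) j = ND n Nm t (-1) j) \<longleftrightarrow>
         (\<exists>c'\<in>Dsp n. cohomologous n Nm p \<sigma> \<iota> (F 0) (\<lambda>i j. 0) y c (\<lambda>i j. 0) (\<lambda>i j. 0) c')"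
proof
  assume "\<exists>t\<in>TQp n \<sigma> 0. \<forall>j. y (-1) j = ND n Nm t (-1) j"
  then obtain t where t: "t \<in> TQp n \<sigma> 0" and ty: "\<forall>j. y (-1) j = ND n Nm t (-1) j"
    by blast
  have y: "y i j = ND n Nm t i j" for i j
    using ty cocycle_0yc_components(1)[OF assms] ND_TQp0_eq_0[OF t] by (cases "i = -1") auto
  have "t \<in> Dsp n" "c \<in> Dsp n"
    using t assms by (auto simp: TQp_def cocycle_def)
  then have "(\<lambda>i j. c i j + extK \<iota> t i j) \<in> Dsp n"
    by (simp add: Dsp_def extK_def)
  moreover have "cohomologous n Nm p \<sigma> \<iota> (F 0) (\<lambda>i j. 0) y c (\<lambda>i j. 0) (\<lambda>i j. 0) (\<lambda>i j. c i j + extK \<iota> t i j)"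
    unfolding cohomologous_def coboundary_def using \<open>t \<in> Dsp n\<close> TQp0_phiD_fixed[OF t] zero_in_F0 y
    by (intro bexI[of _ t] bexI[of _ "\<lambda>i j. 0"]) auto
  ultimately show "\<exists>c'\<in>Dsp n. cohomologous n Nm p \<sigma> \<iota> (F 0) (\<lambda>i j. 0) y c (\<lambda>i j. 0) (\<lambda>i j. 0) c'"
    by blast
next
  assume "\<exists>c'\<in>Dsp n. cohomologous n Nm p \<sigma> \<iota> (F 0) (\<lambda>i j. 0) y c (\<lambda>i j. 0) (\<lambda>i j. 0) c'"
  then show "\<exists>t\<in>TQp n \<sigma> 0. \<forall>j. y (-1) j = ND n Nm t (-1) j"
    using cohomologous_0yc_invariants(1) by fastforce
qed

end

theorem proposition4p2:
  fixes p :: nat and av :: "'k::field_char_0 \<Rightarrow> real" and \<sigma> :: "'k \<Rightarrow> 'k"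
    and \<iota> :: "'k \<Rightarrow> 'K::field"
    and n :: "int \<Rightarrow> nat" and Nm :: "int \<Rightarrow> nat \<Rightarrow> nat \<Rightarrow> int"
    and F :: "int \<Rightarrow> (int \<Rightarrow> nat \<Rightarrow> 'K) set"
  assumes K0: "unramified_padic p av \<sigma>"
    and K: "max_unram_in av \<iota>"
    and fin: "finite {i. n i \<noteq> 0}"
    and Ninj: "\<forall>v::nat \<Rightarrow> rat. (\<forall>j<n (-1). (\<Sum>k<n 0. of_int (Nm 0 j k) * v k) = 0)
                  \<longrightarrow> (\<forall>k<n 0. v k = 0)"
    and Fil: "filtration n F"
  shows
    \<comment> \<open>the first map c |-> [(0,0,c)] is well defined and injective on D_K/F^0\<close>
    "(\<forall>c\<in>Dsp n. cocycle n Nm p \<sigma> (\<lambda>i j. 0) (\<lambda>i j. 0) c) \<and>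
     (\<forall>c\<in>Dsp n. \<forall>c'\<in>Dsp n.
        cohomologous n Nm p \<sigma> \<iota> (F 0) (\<lambda>i j. 0) (\<lambda>i j. 0) c (\<lambda>i j. 0) (\<lambda>i j. 0) c'
        \<longleftrightarrow> (\<lambda>i j. c i j - c' i j) \<in> F 0) \<and>
     \<comment> \<open>every class has a representative of the form (0,y,c)\<close>
     (\<forall>a b c. cocycle n Nm p \<sigma> a b c \<longrightarrow>
        (\<exists>y c'. cocycle n Nm p \<sigma> (\<lambda>i j. 0) y c' \<and>
               cohomologous n Nm p \<sigma> \<iota> (F 0) a b c (\<lambda>i j. 0) y c')) \<and>
     \<comment> \<open>for such a representative the D^-1-component of y lies in T^-1 \<otimes> Q_p and the
         other components give a coboundary\<close>
     (\<forall>y c. cocycle n Nm p \<sigma> (\<lambda>i j. 0) y c \<longrightarrow>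
        (\<lambda>i j. if i = -1 then y i j else 0) \<in> TQp n \<sigma> (-1) \<and>
        coboundary n Nm p \<sigma> \<iota> (F 0) (\<lambda>i j. 0) (\<lambda>i j. if i = -1 then 0 else y i j) (\<lambda>i j. 0)) \<and>
     \<comment> \<open>well-definedness of the second map (to (T^-1/N T^0) \<otimes> Q_p) and of the map
         H^1 -> D_K/(F^0 + T^0 \<otimes> Q_p)\<close>
     (\<forall>y c y' c'. cocycle n Nm p \<sigma> (\<lambda>i j. 0) y c \<and> cocycle n Nm p \<sigma> (\<lambda>i j. 0) y' c' \<and>
        cohomologous n Nm p \<sigma> \<iota> (F 0) (\<lambda>i j. 0) y c (\<lambda>i j. 0) y' c' \<longrightarrow>
        (\<exists>t\<in>TQp n \<sigma> 0. \<forall>j. y (-1) j - y' (-1) j = ND n Nm t (-1) j) \<and>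
        (\<exists>f\<in>F 0. \<exists>t\<in>TQp n \<sigma> 0. \<forall>i j. c i j - c' i j = f i j + extK \<iota> t i j)) \<and>
     \<comment> \<open>surjectivity of the second map\<close>
     (\<forall>u\<in>TQp n \<sigma> (-1). \<exists>y c. cocycle n Nm p \<sigma> (\<lambda>i j. 0) y c \<and>
        (\<lambda>i j. if i = -1 then y i j else 0) = u) \<and>
     \<comment> \<open>exactness in the middle: kernel of the second map = image of the first\<close>
     (\<forall>y c. cocycle n Nm p \<sigma> (\<lambda>i j. 0) y c \<longrightarrow>
        ((\<exists>t\<in>TQp n \<sigma> 0. \<forall>j. y (-1) j = ND n Nm t (-1) j) \<longleftrightarrow>
         (\<exists>c'\<in>Dsp n. cohomologous n Nm p \<sigma> \<iota> (F 0) (\<lambda>i j. 0) y c (\<lambda>i j. 0) (\<lambda>i j. 0) c')))"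
proof -
  interpret semistable_complex p av \<sigma> \<iota> n Nm F
    by unfold_locales (use K0 K Ninj Fil in \<open>auto simp: max_unram_in_def filtration_def\<close>)
  show ?thesis
    apply (intro conjI)
    subgoal using cocycle_0_0 by blast
    subgoal using cohomologous_0_0_iff by blast
    subgoal using cocycle_cohomologous_to_0yc by blast
    subgoal using cocycle_0yc_decomposition by blast
    subgoal using cohomologous_0yc_invariants by blast
    subgoal using TQp_minus1_cocycle TQp_restrict by blast
    subgoal using cocycle_0yc_trivial_iff by blast
    done
qed

end
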